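(* Let $n,r\ge1$. The sequence \[ 0\to\mathbb{R}\to\mathcal{S}_r^-\Lambda^0(\mathbb{R}^n)\xrightarrow{d}\mathcal{S}_r^-\Lambda^1(\mathbb{R}^n)\xrightarrow{d}\cdots\xrightarrow{d}\mathcal{S}_r^-\Lambda^{n-1}(\mathbb{R}^n)\xrightarrow{d}\mathcal{S}_r^-\Lambda^n(\mathbb{R}^n)\to0, \] where $\mathbb{R}\to\mathcal{S}_r^-\Lambda^0$ is the inclusion of constant functions and the other maps are the exterior derivative, is exact.
   Context: Fix $n\ge1$. For a multi-index $\alpha\in\mathbb{N}^n$ and a subset $\sigma=\{\sigma(1)<\dots<\sigma(k)\}\subset\{1,\dots,n\}$, the form monomial is $x^\alpha dx_\sigma:=x_1^{\alpha_1}\cdots x_n^{\alpha_n}\,dx_{\sigma(1)}\wedge\cdots\wedge dx_{\sigma(k)}$, of degree $|\alpha|$. $\mathcal{H}_r\Lambda^k(\mathbb{R}^n)$ is the span of form monomials with $|\alpha|=r$, $|\sigma|=k$ (it is $0$ if $r<0$ or $k\notin\{0,\dots,n\}$), and $\mathcal{P}_r\Lambda^k:=\bigoplus_{j=0}^r\mathcal{H}_j\Lambda^k$ ($=0$ if $r<0$). $d$ is the exterior derivative. The Koszul operator $\kappa$ is defined on monomials by $\kappa(x^\alpha dx_\sigma)=\sum_{i=1}^k(-1)^{i+1}x^\alpha x_{\sigma(i)}\,dx_{\sigma(1)}\wedge\cdots\wedge\widehat{dx_{\sigma(i)}}\wedge\cdots\wedge dx_{\sigma(k)}$ and extended linearly.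 The linear degree is $\mathrm{ldeg}(x^\alpha dx_\sigma):=\#\{i\notin\sigma:\alpha_i=1\}$, and $\mathcal{H}_{r,l}\Lambda^k$ is the span of form monomials in $\mathcal{H}_r\Lambda^k$ with linear degree $\ge l$. Define $\mathcal{J}_r\Lambda^k:=\sum_{l\ge1}\kappa\,\mathcal{H}_{r+l-1,l}\Lambda^{k+1}$, the serendipity space $\mathcal{S}_r\Lambda^k:=\mathcal{P}_r\Lambda^k+\mathcal{J}_r\Lambda^k+d\,\mathcal{J}_{r+1}\Lambda^{k-1}$ (forms of degree $-1$ or $n+1$ are $0$), and for $r\ge1$ the trimmed serendipity space $\mathcal{S}_r^-\Lambda^k:=\mathcal{S}_{r-1}\Lambda^k+\kappa\,\mathcal{S}_{r-1}\Lambda^{k+1}$, all on $\mathbb{R}^n$. *)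

theory Defs
  imports Complex_Main
begin

text \<open>Polynomial differential forms on R^n, represented by their coefficient
functions w.r.t. the form monomials x^alpha dx_sigma.  A multi-index alpha is a
function nat => nat (coordinates indexed 0..n-1, alpha i = 0 for i >= n), and
sigma is a subset of {0..<n}.\<close>

type_synonym mindex = "nat \<Rightarrow> nat"
type_synonym pform = "mindex \<times> nat set \<Rightarrow> real"

definition mdeg :: "nat \<Rightarrow> mindex \<Rightarrow> nat" where
  "mdeg n \<alpha> = (\<Sum>i<n. \<alpha> i)"

definition ldeg :: "nat \<Rightarrow> mindex \<Rightarrow> nat set \<Rightarrow> nat" where
  "ldeg n \<alpha> \<sigma> = card {i. i < n \<and> i \<notin> \<sigma> \<and> \<alpha> i = 1}"

definition mspan :: "nat \<Rightarrow> nat \<Rightarrow> (mindex \<Rightarrow> nat set \<Rightarrow> bool) \<Rightarrow> pform set" where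
  "mspan n k P = {c. finite {m. c m \<noteq> 0} \<and>
     (\<forall>\<alpha> \<sigma>. c (\<alpha>, \<sigma>) \<noteq> 0 \<longrightarrow>
        \<sigma> \<subseteq> {..<n} \<and> card \<sigma> = k \<and> (\<forall>i\<ge>n. \<alpha> i = 0) \<and> P \<alpha> \<sigma>)}"

definition Hsp :: "nat \<Rightarrow> nat \<Rightarrow> nat \<Rightarrow> pform set" where
  "Hsp n r k = mspan n k (\<lambda>\<alpha> \<sigma>. mdeg n \<alpha> = r)"

definition Hlsp :: "nat \<Rightarrow> nat \<Rightarrow> nat \<Rightarrow> nat \<Rightarrow> pform set" where
  "Hlsp n r l k = mspan n k (\<lambda>\<alpha> \<sigma>. mdeg n \<alpha> = r \<and> ldeg n \<alpha> \<sigma> \<ge> l)"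

definition Psp :: "nat \<Rightarrow> nat \<Rightarrow> nat \<Rightarrow> pform set" where
  "Psp n r k = mspan n k (\<lambda>\<alpha> \<sigma>. mdeg n \<alpha> \<le> r)"

text \<open>Exterior derivative: d(x^alpha dx_sigma) = sum_{j notin sigma} alpha_j
x^(alpha - e_j) dx_j /\ dx_sigma, written on coefficients.\<close>
definition extd :: "pform \<Rightarrow> pform" where
  "extd c = (\<lambda>(\<beta>, \<tau>). \<Sum>j\<in>\<tau>. (-1) ^ card {i\<in>\<tau>. i < j} *
      real (\<beta> j + 1) * c (\<beta>(j := \<beta> j + 1), \<tau> - {j}))"

text \<open>Koszul operator on coefficients (the sign (-1)^(i+1) for sigma(i) equals
(-1)^(number of elements of sigma below sigma(i))).\<close>
definition koszul :: "nat \<Rightarrow> pform \<Rightarrow> pform" where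
  "koszul n c = (\<lambda>(\<beta>, \<tau>). \<Sum>j\<in>{j. j < n \<and> j \<notin> \<tau> \<and> 1 \<le> \<beta> j}.
      (-1) ^ card {i\<in>\<tau>. i < j} * c (\<beta>(j := \<beta> j - 1), insert j \<tau>))"

definition sumsp :: "(nat \<Rightarrow> pform set) \<Rightarrow> nat set \<Rightarrow> pform set" where
  "sumsp V I = {c. \<exists>L f. finite L \<and> L \<subseteq> I \<and> (\<forall>l\<in>L. f l \<in> V l) \<and>
                      c = (\<lambda>m. \<Sum>l\<in>L. f l m)}"

definition Jsp :: "nat \<Rightarrow> nat \<Rightarrow> nat \<Rightarrow> pform set" where
  "Jsp n r k = sumsp (\<lambda>l. koszul n ` Hlsp n (r + l - 1) l (k + 1)) {1..}"

definition Ssp :: "nat \<Rightarrow> nat \<Rightarrow> nat \<Rightarrow> pform set" where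
  "Ssp n r k = {(\<lambda>m. a m + b m + e m) | a b e.
      a \<in> Psp n r k \<and> b \<in> Jsp n r k \<and>
      e \<in> (if k = 0 then {(\<lambda>_. 0)} else extd ` Jsp n (r + 1) (k - 1))}"

text \<open>Trimmed serendipity space, for r >= 1.\<close>
definition Smsp :: "nat \<Rightarrow> nat \<Rightarrow> nat \<Rightarrow> pform set" where
  "Smsp n r k = {(\<lambda>m. a m + b m) | a b.
      a \<in> Ssp n (r - 1) k \<and> b \<in> koszul n ` Ssp n (r - 1) (k + 1)}"

definition constf :: "real \<Rightarrow> pform" where
  "constf a = (\<lambda>(\<alpha>, \<sigma>). if \<alpha> = (\<lambda>_. 0) \<and> \<sigma> = {} then a else 0)"

end

theory Submission
  imports Defs
begin

text \<open>
  On the form monomial \<open>x\<^sup>\<alpha> dx\<^sub>\<sigma>\<close> the Koszul operator is a homotopy up to a scalar: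
  \<open>(d\<kappa> + \<kappa>d) (x\<^sup>\<alpha> dx\<^sub>\<sigma>) = (|\<alpha>| + |\<sigma>|) x\<^sup>\<alpha> dx\<^sub>\<sigma>\<close>. Both \<open>d\<close> and \<open>\<kappa>\<close> preserve the weight
  \<open>|\<alpha>| + |\<sigma>|\<close>, so they commute with rescaling every monomial by a function of its weight, and all
  the spaces \<open>\<P>\<^sub>r\<close>, \<open>\<J>\<^sub>r\<close>, \<open>\<S>\<^sub>r\<close>, \<open>\<S>\<^sub>r\<^sup>-\<close> are invariant under such rescalings.

  The space \<open>\<S>\<^sub>q\<Lambda>\<^sup>k\<close> is mapped into \<open>\<S>\<^sub>q\<Lambda>\<^sup>k\<^sup>+\<^sup>1\<close> by \<open>d\<close>, because \<open>\<J>\<^sub>q = \<kappa>\<H>\<^sub>q\<^sub>,\<^sub>1 + \<J>\<^sub>q\<^sub>+\<^sub>1\<close> and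
  \<open>d\<kappa>\<H>\<^sub>q\<^sub>,\<^sub>1 \<subseteq> \<P>\<^sub>q\<close>. For \<open>a + \<kappa>b \<in> \<S>\<^sub>r\<^sup>-\<close> the homotopy formula gives
  \<open>d(a + \<kappa>b) = (da + Nb) + \<kappa>(-db)\<close> with \<open>N\<close> the weight, so \<open>d\<S>\<^sub>r\<^sup>- \<subseteq> \<S>\<^sub>r\<^sup>-\<close>. Conversely a closed
  \<open>c \<in> \<S>\<^sub>r\<^sup>-\<Lambda>\<^sup>k\<close>, \<open>k \<ge> 1\<close>, equals \<open>d\<kappa>(c/N)\<close>, and \<open>\<kappa>\<S>\<^sub>r\<^sup>-\<Lambda>\<^sup>k \<subseteq> \<S>\<^sub>r\<^sup>-\<Lambda>\<^sup>k\<^sup>-\<^sup>1\<close> because \<open>\<kappa>\<kappa> = 0\<close>.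
  For \<open>k = 0\<close> the formula reads \<open>Nc = 0\<close>, which forces \<open>c\<close> to be constant.
\<close>

definition ins_sign :: "nat set \<Rightarrow> nat \<Rightarrow> real" where
  "ins_sign \<tau> j = (-1) ^ card {i\<in>\<tau>. i < j}"

lemma ins_sign_square: "ins_sign \<tau> j * ins_sign \<tau> j = 1"
  unfolding ins_sign_def by (simp add: power_mult_distrib[symmetric])

lemma ins_sign_remove:
  "ins_sign (\<tau> - {j}) i = (if j \<in> \<tau> \<and> j < i then - ins_sign \<tau> i else ins_sign \<tau> i)"
proof (cases "j \<in> \<tau> \<and> j < i")
  case True
  then have "{t\<in>\<tau>. t < i} = insert j {t\<in>\<tau> - {j}. t < i}" by auto
  moreover have "finite {t\<in>\<tau> - {j}. t < i}" by (rule finite_subset[of _ "{..<i}"]) auto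
  ultimately show ?thesis using True unfolding ins_sign_def by simp
next
  case False
  then have "{t\<in>\<tau> - {j}. t < i} = {t\<in>\<tau>. t < i}" by auto
  then show ?thesis using False unfolding ins_sign_def by simp
qed

lemma ins_sign_insert:
  "ins_sign (insert j \<tau>) i = (if j \<notin> \<tau> \<and> j < i then - ins_sign \<tau> i else ins_sign \<tau> i)"
  using ins_sign_remove[of "insert j \<tau>" j i]
  by (cases "j \<in> \<tau>") (auto simp: insert_absorb)

lemma ins_sign_remove_swap:
  "j \<in> \<tau> \<Longrightarrow> i \<in> \<tau> \<Longrightarrow> i \<noteq> j \<Longrightarrow>
    ins_sign \<tau> j * ins_sign (\<tau> - {j}) i = - (ins_sign \<tau> i * ins_sign (\<tau> - {i}) j)"
  by (cases "j < i") (auto simp: ins_sign_remove)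

lemma ins_sign_insert_swap:
  "j \<notin> \<tau> \<Longrightarrow> i \<notin> \<tau> \<Longrightarrow> i \<noteq> j \<Longrightarrow>
    ins_sign \<tau> j * ins_sign (insert j \<tau>) i = - (ins_sign \<tau> i * ins_sign (insert i \<tau>) j)"
  by (cases "j < i") (auto simp: ins_sign_insert)

lemma ins_sign_remove_insert_swap:
  "j \<in> \<tau> \<Longrightarrow> i \<notin> \<tau> \<Longrightarrow>
    ins_sign \<tau> j * ins_sign (\<tau> - {j}) i = - (ins_sign \<tau> i * ins_sign (insert i \<tau>) j)"
  by (cases "j < i") (auto simp: ins_sign_remove ins_sign_insert)

lemma sum_off_diagonal_antisym:
  fixes G :: "'a \<Rightarrow> 'a \<Rightarrow> real"
  assumes "finite A" and "\<And>x y. x \<in> A \<Longrightarrow> y \<in> A \<Longrightarrow> x \<noteq> y \<Longrightarrow> G x y = - G y x"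
  shows "(\<Sum>x\<in>A. \<Sum>y\<in>A - {x}. G x y) = 0"
proof -
  define H where "H x y = (if x = y then 0 else G x y)" for x y
  have off: "(\<Sum>y\<in>A - {x}. G x y) = (\<Sum>y\<in>A. H x y)" if "x \<in> A" for x
    using assms(1) that by (simp add: H_def sum.If_cases Diff_eq Int_commute)
  have "(\<Sum>x\<in>A. \<Sum>y\<in>A. H x y) = (\<Sum>y\<in>A. \<Sum>x\<in>A. H x y)" by (rule sum.swap)
  also have "\<dots> = - (\<Sum>y\<in>A. \<Sum>x\<in>A. H y x)"
  proof -
    have "H x y = - H y x" if "x \<in> A" "y \<in> A" for x y
      using assms(2)[OF that] by (cases "x = y") (simp_all add: H_def)
    then show ?thesis unfolding sum_negf[symmetric] by (intro sum.cong refl) blast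
  qed
  finally show ?thesis by (simp add: off)
qed

definition koszul_indices :: "nat \<Rightarrow> mindex \<Rightarrow> nat set \<Rightarrow> nat set" where
  "koszul_indices n \<beta> \<tau> = {j. j < n \<and> j \<notin> \<tau> \<and> 1 \<le> \<beta> j}"

lemma finite_koszul_indices [simp]: "finite (koszul_indices n \<beta> \<tau>)"
  by (rule finite_subset[of _ "{..<n}"]) (auto simp: koszul_indices_def)

lemma koszul_apply:
  "koszul n c (\<beta>, \<tau>) =
    (\<Sum>j\<in>koszul_indices n \<beta> \<tau>. ins_sign \<tau> j * c (\<beta>(j := \<beta> j - 1), insert j \<tau>))"
  unfolding koszul_def koszul_indices_def ins_sign_def by simp

lemma extd_apply:
  "extd c (\<beta>, \<tau>) =
    (\<Sum>j\<in>\<tau>. ins_sign \<tau> j * real (\<beta> j + 1) * c (\<beta>(j := \<beta> j + 1), \<tau> - {j}))"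
  unfolding extd_def ins_sign_def by simp

lemma extd_apply_infinite: "infinite \<tau> \<Longrightarrow> extd c (\<beta>, \<tau>) = 0"
  by (simp add: extd_apply)

lemma extd_add: "extd (\<lambda>m. x m + y m) = (\<lambda>m. extd x m + extd y m)"
  unfolding extd_def by (auto simp: sum.distrib algebra_simps)

lemma koszul_add: "koszul n (\<lambda>m. x m + y m) = (\<lambda>m. koszul n x m + koszul n y m)"
  unfolding koszul_def by (auto simp: sum.distrib algebra_simps)

lemma extd_zero: "extd (\<lambda>_. 0) = (\<lambda>_. 0)"
  unfolding extd_def by auto

lemma koszul_zero: "koszul n (\<lambda>_. 0) = (\<lambda>_. 0)"
  unfolding koszul_def by auto

lemma mdeg_update: "j < n \<Longrightarrow> mdeg n (\<beta>(j := v)) + \<beta> j = mdeg n \<beta> + v"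
  unfolding mdeg_def by (simp add: sum.remove[of "{..<n}" j])

lemma mdeg_update_outside: "\<not> j < n \<Longrightarrow> mdeg n (\<beta>(j := v)) = mdeg n \<beta>"
  unfolding mdeg_def by (rule sum.cong) auto

lemma extd_extd: "extd (extd c) = (\<lambda>_. 0)"
proof (intro ext, clarify)
  fix \<beta> \<tau>
  show "extd (extd c) (\<beta>, \<tau>) = 0"
  proof (cases "finite \<tau>")
    case True
    define G where "G j i = ins_sign \<tau> j * ins_sign (\<tau> - {j}) i *
      (real (\<beta> j + 1) * real (\<beta> i + 1) * c (\<beta>(j := \<beta> j + 1, i := \<beta> i + 1), \<tau> - {j} - {i}))"
      for j i
    have "extd (extd c) (\<beta>, \<tau>) = (\<Sum>j\<in>\<tau>. \<Sum>i\<in>\<tau> - {j}. G j i)"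
      unfolding extd_apply sum_distrib_left by (intro sum.cong refl) (auto simp: G_def ac_simps)
    also have "\<dots> = 0"
    proof (rule sum_off_diagonal_antisym[OF True])
      fix j i assume ji: "j \<in> \<tau>" "i \<in> \<tau>" "j \<noteq> i"
      then have "\<beta>(j := \<beta> j + 1, i := \<beta> i + 1) = \<beta>(i := \<beta> i + 1, j := \<beta> j + 1)"
        and "\<tau> - {j} - {i} = \<tau> - {i} - {j}" by (auto intro: fun_upd_twist)
      then show "G j i = - G i j"
        using ins_sign_remove_swap[OF ji(1,2) ji(3)[symmetric]] by (simp add: G_def ac_simps)
    qed
    finally show ?thesis .
  qed (simp add: extd_apply_infinite)
qed

lemma koszul_koszul: "koszul n (koszul n c) = (\<lambda>_. 0)"
proof (intro ext, clarify)
  fix \<beta> \<tau>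
  let ?I = "koszul_indices n \<beta> \<tau>"
  define G where "G j i = ins_sign \<tau> j * ins_sign (insert j \<tau>) i *
    c (\<beta>(j := \<beta> j - 1, i := \<beta> i - 1), insert i (insert j \<tau>))" for j i
  have "koszul n (koszul n c) (\<beta>, \<tau>) = (\<Sum>j\<in>?I. \<Sum>i\<in>?I - {j}. G j i)"
    unfolding koszul_apply sum_distrib_left by (intro sum.cong) (auto simp: koszul_indices_def G_def ac_simps)
  also have "\<dots> = 0"
  proof (rule sum_off_diagonal_antisym[OF finite_koszul_indices])
    fix j i assume ji: "j \<in> ?I" "i \<in> ?I" "j \<noteq> i"
    then have "\<beta>(j := \<beta> j - 1, i := \<beta> i - 1) = \<beta>(i := \<beta> i - 1, j := \<beta> j - 1)"
      and "insert i (insert j \<tau>) = insert j (insert i \<tau>)" by (auto intro: fun_upd_twist)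
    moreover have "j \<notin> \<tau>" "i \<notin> \<tau>" using ji by (auto simp: koszul_indices_def)
    ultimately show "G j i = - G i j"
      using ins_sign_insert_swap[of j \<tau> i] ji(3) by (simp add: G_def ac_simps)
  qed
  finally show "koszul n (koszul n c) (\<beta>, \<tau>) = 0" .
qed

section \<open>The homotopy formula\<close>

lemma koszul_apply_extd_index:
  assumes "j \<in> \<tau>"
  shows "koszul n c (\<beta>(j := \<beta> j + 1), \<tau> - {j}) =
    (if j < n then ins_sign \<tau> j * c (\<beta>, \<tau>) else 0) +
    (\<Sum>i\<in>koszul_indices n \<beta> \<tau>.
       ins_sign (\<tau> - {j}) i * c (\<beta>(j := \<beta> j + 1, i := \<beta> i - 1), insert i (\<tau> - {j})))"
proof -
  let ?I = "koszul_indices n \<beta> \<tau>"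
  have I: "koszul_indices n (\<beta>(j := \<beta> j + 1)) (\<tau> - {j}) = (if j < n then insert j ?I else ?I)"
    and "j \<notin> ?I"
    using assms by (auto simp: koszul_indices_def)
  moreover have "insert j (\<tau> - {j}) = \<tau>" using assms by auto
  ultimately show ?thesis
    unfolding koszul_apply I using assms
    by (auto simp: ins_sign_remove intro!: sum.cong)
qed

lemma extd_apply_koszul_index:
  assumes "finite \<tau>" and "i \<in> koszul_indices n \<beta> \<tau>"
  shows "extd c (\<beta>(i := \<beta> i - 1), insert i \<tau>) =
    ins_sign \<tau> i * real (\<beta> i) * c (\<beta>, \<tau>) +
    (\<Sum>j\<in>\<tau>. ins_sign (insert i \<tau>) j * real (\<beta> j + 1) *
       c (\<beta>(i := \<beta> i - 1, j := \<beta> j + 1), insert i \<tau> - {j}))"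
proof -
  have "i \<notin> \<tau>" "1 \<le> \<beta> i" using assms(2) by (auto simp: koszul_indices_def)
  then show ?thesis
    unfolding extd_apply using assms(1)
    by (auto simp: ins_sign_insert insert_Diff_if intro!: sum.cong)
qed

lemma mdeg_split_koszul_indices:
  assumes "finite \<tau>"
  shows "(\<Sum>j\<in>\<tau>. if j < n then \<beta> j + 1 else 0) + (\<Sum>i\<in>koszul_indices n \<beta> \<tau>. \<beta> i)
    = mdeg n \<beta> + card (\<tau> \<inter> {..<n})"
proof -
  have "(\<Sum>j\<in>\<tau>. if j < n then \<beta> j + 1 else 0) = (\<Sum>j\<in>\<tau> \<inter> {..<n}. \<beta> j + 1)"
    using assms by (simp add: sum.If_cases Int_def)
  also have "\<dots> = (\<Sum>j\<in>{..<n} \<inter> \<tau>. \<beta> j) + card (\<tau> \<inter> {..<n})"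
    by (simp add: sum.distrib Int_commute del: add_Suc_right One_nat_def)
  finally have "(\<Sum>j\<in>\<tau>. if j < n then \<beta> j + 1 else 0) = \<dots>" .
  moreover have "(\<Sum>i\<in>koszul_indices n \<beta> \<tau>. \<beta> i) = (\<Sum>i\<in>{..<n} - \<tau>. \<beta> i)"
    by (rule sum.mono_neutral_left) (auto simp: koszul_indices_def)
  moreover have "mdeg n \<beta> = (\<Sum>i\<in>{..<n} \<inter> \<tau>. \<beta> i) + (\<Sum>i\<in>{..<n} - \<tau>. \<beta> i)"
    unfolding mdeg_def by (rule sum.Int_Diff) simp
  ultimately show ?thesis by simp
qed

definition homotopy_cross_term :: "pform \<Rightarrow> mindex \<Rightarrow> nat set \<Rightarrow> nat \<Rightarrow> nat \<Rightarrow> real" where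
  "homotopy_cross_term c \<beta> \<tau> j i = ins_sign \<tau> j * ins_sign (\<tau> - {j}) i * real (\<beta> j + 1) *
    c (\<beta>(j := \<beta> j + 1, i := \<beta> i - 1), insert i (\<tau> - {j}))"

lemma ins_sign_cancel: "ins_sign \<tau> j * (ins_sign \<tau> j * x) = x"
  using ins_sign_square[of \<tau> j] by (simp flip: mult.assoc)

lemma extd_koszul_apply:
  "extd (koszul n c) (\<beta>, \<tau>) =
    (\<Sum>j\<in>\<tau>. if j < n then real (\<beta> j + 1) else 0) * c (\<beta>, \<tau>) +
    (\<Sum>j\<in>\<tau>. \<Sum>i\<in>koszul_indices n \<beta> \<tau>. homotopy_cross_term c \<beta> \<tau> j i)"
proof -
  have summand: "ins_sign \<tau> j * real (\<beta> j + 1) * koszul n c (\<beta>(j := \<beta> j + 1), \<tau> - {j}) =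
      (if j < n then real (\<beta> j + 1) else 0) * c (\<beta>, \<tau>) +
      (\<Sum>i\<in>koszul_indices n \<beta> \<tau>. homotopy_cross_term c \<beta> \<tau> j i)" if "j \<in> \<tau>" for j
    unfolding koszul_apply_extd_index[OF that] homotopy_cross_term_def
    by (simp add: algebra_simps sum_distrib_left ins_sign_cancel)
  show ?thesis
    unfolding extd_apply sum_distrib_right sum.distrib[symmetric]
    by (rule sum.cong) (simp_all only: summand)
qed

lemma koszul_extd_apply:
  assumes "finite \<tau>"
  shows "koszul n (extd c) (\<beta>, \<tau>) =
    (\<Sum>i\<in>koszul_indices n \<beta> \<tau>. real (\<beta> i)) * c (\<beta>, \<tau>) -
    (\<Sum>j\<in>\<tau>. \<Sum>i\<in>koszul_indices n \<beta> \<tau>. homotopy_cross_term c \<beta> \<tau> j i)"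
proof -
  let ?I = "koszul_indices n \<beta> \<tau>"
  have swap: "ins_sign \<tau> i * (ins_sign (insert i \<tau>) j * real (\<beta> j + 1) *
      c (\<beta>(i := \<beta> i - 1, j := \<beta> j + 1), insert i \<tau> - {j})) = - homotopy_cross_term c \<beta> \<tau> j i"
    if "i \<in> ?I" "j \<in> \<tau>" for i j
  proof -
    have "i \<notin> \<tau>" using that(1) by (simp add: koszul_indices_def)
    with that(2) have "i \<noteq> j" "insert i \<tau> - {j} = insert i (\<tau> - {j})"
      and "\<beta>(i := \<beta> i - 1, j := \<beta> j + 1) = \<beta>(j := \<beta> j + 1, i := \<beta> i - 1)"
      by (auto intro: fun_upd_twist)
    with ins_sign_remove_insert_swap[OF that(2) \<open>i \<notin> \<tau>\<close>] show ?thesis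
      by (simp add: homotopy_cross_term_def)
  qed
  have summand: "ins_sign \<tau> i * extd c (\<beta>(i := \<beta> i - 1), insert i \<tau>) =
      real (\<beta> i) * c (\<beta>, \<tau>) - (\<Sum>j\<in>\<tau>. homotopy_cross_term c \<beta> \<tau> j i)" if "i \<in> ?I" for i
  proof -
    have "ins_sign \<tau> i * (\<Sum>j\<in>\<tau>. ins_sign (insert i \<tau>) j * real (\<beta> j + 1) *
        c (\<beta>(i := \<beta> i - 1, j := \<beta> j + 1), insert i \<tau> - {j})) =
        (\<Sum>j\<in>\<tau>. - homotopy_cross_term c \<beta> \<tau> j i)"
      unfolding sum_distrib_left by (rule sum.cong) (simp_all only: swap that)
    then show ?thesis
      unfolding extd_apply_koszul_index[OF assms that]
      by (simp add: ins_sign_cancel distrib_left sum_negf)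
  qed
  show ?thesis
    unfolding koszul_apply sum_distrib_right sum.swap[of "homotopy_cross_term c \<beta> \<tau>" ?I \<tau>]
      sum_subtractf[symmetric]
    by (rule sum.cong) (simp_all only: summand)
qed

lemma extd_koszul_homotopy_finite:
  assumes "finite \<tau>"
  shows "extd (koszul n c) (\<beta>, \<tau>) + koszul n (extd c) (\<beta>, \<tau>) =
    real (mdeg n \<beta> + card (\<tau> \<inter> {..<n})) * c (\<beta>, \<tau>)"
proof -
  have count: "(\<Sum>j\<in>\<tau>. if j < n then real (\<beta> j + 1) else 0) + (\<Sum>i\<in>koszul_indices n \<beta> \<tau>. real (\<beta> i))
      = real (mdeg n \<beta> + card (\<tau> \<inter> {..<n}))"
    unfolding mdeg_split_koszul_indices[OF assms, symmetric] of_nat_add of_nat_sum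
    by (simp add: if_distrib add.commute cong: if_cong)
  show ?thesis
    unfolding extd_koszul_apply koszul_extd_apply[OF assms] count[symmetric]
    by (simp add: algebra_simps)
qed

text \<open>The guard on \<open>finite \<sigma>\<close> only fixes a junk value: \<open>d\<close> and \<open>\<kappa>\<close> vanish at infinite \<open>\<sigma>\<close>.\<close>

definition form_weight :: "nat \<Rightarrow> mindex \<times> nat set \<Rightarrow> nat" where
  "form_weight n m = (if finite (snd m) then mdeg n (fst m) + card (snd m \<inter> {..<n}) else 0)"

lemma extd_koszul_homotopy:
  "extd (koszul n c) m + koszul n (extd c) m = real (form_weight n m) * c m"
proof (cases m)
  case (Pair \<beta> \<tau>)
  then show ?thesis
    using extd_koszul_homotopy_finite[of \<tau> n c \<beta>]
    by (cases "finite \<tau>") (simp_all add: form_weight_def koszul_apply extd_apply_infinite)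
qed

lemma form_weight_koszul_index:
  assumes "j \<in> koszul_indices n \<beta> \<tau>"
  shows "form_weight n (\<beta>(j := \<beta> j - 1), insert j \<tau>) = form_weight n (\<beta>, \<tau>)"
proof -
  have "j < n" "j \<notin> \<tau>" "1 \<le> \<beta> j" using assms by (auto simp: koszul_indices_def)
  moreover have "insert j \<tau> \<inter> {..<n} = insert j (\<tau> \<inter> {..<n})" using \<open>j < n\<close> by auto
  moreover have "mdeg n (\<beta>(j := \<beta> j - 1)) + 1 = mdeg n \<beta>"
    using mdeg_update[of j n \<beta> "\<beta> j - 1"] \<open>j < n\<close> \<open>1 \<le> \<beta> j\<close> by linarith
  ultimately show ?thesis by (simp add: form_weight_def)
qed

lemma form_weight_extd_index:
  assumes "j \<in> \<tau>"
  shows "form_weight n (\<beta>(j := \<beta> j + 1), \<tau> - {j}) = form_weight n (\<beta>, \<tau>)"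
proof (cases "j < n")
  case True
  have "\<tau> \<inter> {..<n} = insert j ((\<tau> - {j}) \<inter> {..<n})" using assms True by auto
  then show ?thesis using mdeg_update[OF True, of \<beta> "\<beta> j + 1"] by (simp add: form_weight_def)
next
  case False
  then have "(\<tau> - {j}) \<inter> {..<n} = \<tau> \<inter> {..<n}" by auto
  then show ?thesis using mdeg_update_outside[OF False] by (simp add: form_weight_def)
qed

section \<open>Rescaling by a function of the weight\<close>

definition weight_rescale :: "nat \<Rightarrow> (nat \<Rightarrow> real) \<Rightarrow> pform \<Rightarrow> pform" where
  "weight_rescale n \<phi> c = (\<lambda>m. \<phi> (form_weight n m) * c m)"

lemma koszul_weight_rescale: "koszul n (weight_rescale n \<phi> c) = weight_rescale n \<phi> (koszul n c)"
proof (intro ext, clarify)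
  fix \<beta> \<tau>
  show "koszul n (weight_rescale n \<phi> c) (\<beta>, \<tau>) = weight_rescale n \<phi> (koszul n c) (\<beta>, \<tau>)"
    unfolding weight_rescale_def koszul_apply sum_distrib_left
    by (intro sum.cong refl) (simp only: form_weight_koszul_index mult.left_commute)
qed

lemma extd_weight_rescale: "extd (weight_rescale n \<phi> c) = weight_rescale n \<phi> (extd c)"
proof (intro ext, clarify)
  fix \<beta> \<tau>
  show "extd (weight_rescale n \<phi> c) (\<beta>, \<tau>) = weight_rescale n \<phi> (extd c) (\<beta>, \<tau>)"
    unfolding weight_rescale_def extd_apply sum_distrib_left
    by (intro sum.cong refl) (simp only: form_weight_extd_index mult.left_commute)
qed

abbreviation forms :: "nat \<Rightarrow> nat \<Rightarrow> pform set" where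
  "forms n k \<equiv> mspan n k (\<lambda>_ _. True)"

lemma mspanI:
  assumes "finite {m. c m \<noteq> 0}"
    and "\<And>\<alpha> \<sigma>. c (\<alpha>, \<sigma>) \<noteq> 0 \<Longrightarrow> \<sigma> \<subseteq> {..<n} \<and> card \<sigma> = k \<and> (\<forall>i\<ge>n. \<alpha> i = 0) \<and> P \<alpha> \<sigma>"
  shows "c \<in> mspan n k P"
  using assms unfolding mspan_def by simp

lemma mspanD:
  "c \<in> mspan n k P \<Longrightarrow> c (\<alpha>, \<sigma>) \<noteq> 0 \<Longrightarrow> \<sigma> \<subseteq> {..<n} \<and> card \<sigma> = k \<and> (\<forall>i\<ge>n. \<alpha> i = 0) \<and> P \<alpha> \<sigma>"
  unfolding mspan_def by simp

lemma mspan_finite_support: "c \<in> mspan n k P \<Longrightarrow> finite {m. c m \<noteq> 0}"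
  unfolding mspan_def by simp

lemma mspan_mono: "(\<And>\<alpha> \<sigma>. P \<alpha> \<sigma> \<Longrightarrow> Q \<alpha> \<sigma>) \<Longrightarrow> mspan n k P \<subseteq> mspan n k Q"
  unfolding mspan_def by blast

lemma mspan_weight_rescale: "c \<in> mspan n k P \<Longrightarrow> weight_rescale n \<phi> c \<in> mspan n k P"
proof (rule mspanI)
  assume c: "c \<in> mspan n k P"
  have "{m. weight_rescale n \<phi> c m \<noteq> 0} \<subseteq> {m. c m \<noteq> 0}" by (auto simp: weight_rescale_def)
  then show "finite {m. weight_rescale n \<phi> c m \<noteq> 0}"
    using mspan_finite_support[OF c] by (rule finite_subset)
  fix \<alpha> \<sigma> assume "weight_rescale n \<phi> c (\<alpha>, \<sigma>) \<noteq> 0"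
  then have "c (\<alpha>, \<sigma>) \<noteq> 0" by (simp add: weight_rescale_def)
  then show "\<sigma> \<subseteq> {..<n} \<and> card \<sigma> = k \<and> (\<forall>i\<ge>n. \<alpha> i = 0) \<and> P \<alpha> \<sigma>" by (rule mspanD[OF c])
qed

lemma finite_support_local:
  fixes c F :: "'a \<Rightarrow> real" and n :: nat
  assumes "finite {m. c m \<noteq> 0}"
    and "\<And>m. F m \<noteq> 0 \<Longrightarrow> \<exists>m' j. c m' \<noteq> 0 \<and> j < n \<and> m = g m' j"
  shows "finite {m. F m \<noteq> 0}"
proof (rule finite_subset)
  show "{m. F m \<noteq> 0} \<subseteq> (\<lambda>(m', j). g m' j) ` ({m. c m \<noteq> 0} \<times> {..<n})"
    using assms(2) by fastforce
  have "finite ({m. c m \<noteq> 0} \<times> {..<n})" using assms(1) by simp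
  then show "finite ((\<lambda>(m', j). g m' j) ` ({m. c m \<noteq> 0} \<times> {..<n}))" by (rule finite_imageI)
qed

lemma koszul_mspan:
  assumes c: "c \<in> mspan n (Suc k) (\<lambda>\<alpha> \<sigma>. D (mdeg n \<alpha>))"
  shows "koszul n c \<in> mspan n k (\<lambda>\<alpha> \<sigma>. D (mdeg n \<alpha> - 1))"
proof -
  have witness: "\<exists>j. j < n \<and> j \<notin> \<tau> \<and> 1 \<le> \<beta> j \<and> c (\<beta>(j := \<beta> j - 1), insert j \<tau>) \<noteq> 0"
    if nz: "koszul n c (\<beta>, \<tau>) \<noteq> 0" for \<beta> \<tau>
  proof -
    obtain j where "j \<in> koszul_indices n \<beta> \<tau>"
      and "ins_sign \<tau> j * c (\<beta>(j := \<beta> j - 1), insert j \<tau>) \<noteq> 0"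
      using nz unfolding koszul_apply by (rule sum.not_neutral_contains_not_neutral)
    then show ?thesis unfolding koszul_indices_def by auto
  qed
  show ?thesis
  proof (rule mspanI)
    show "finite {m. koszul n c m \<noteq> 0}"
    proof (rule finite_support_local[OF mspan_finite_support[OF c]])
      fix m assume nz: "koszul n c m \<noteq> 0"
      obtain \<beta> \<tau> where m: "m = (\<beta>, \<tau>)" by (cases m)
      obtain j where "j < n" "j \<notin> \<tau>" "1 \<le> \<beta> j" "c (\<beta>(j := \<beta> j - 1), insert j \<tau>) \<noteq> 0"
        using witness nz unfolding m by blast
      then show "\<exists>m' j. c m' \<noteq> 0 \<and> j < n \<and>
          m = (\<lambda>(\<beta>', \<tau>') j. (\<beta>'(j := \<beta>' j + 1), \<tau>' - {j})) m' j"
        unfolding m by (intro exI[of _ "(\<beta>(j := \<beta> j - 1), insert j \<tau>)"] exI[of _ j]) auto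
    qed
  next
    fix \<alpha> \<sigma> assume "koszul n c (\<alpha>, \<sigma>) \<noteq> 0"
    then obtain j where j: "j < n" "j \<notin> \<sigma>" "1 \<le> \<alpha> j"
      and "c (\<alpha>(j := \<alpha> j - 1), insert j \<sigma>) \<noteq> 0"
      using witness by blast
    from mspanD[OF c this(4)] have P: "insert j \<sigma> \<subseteq> {..<n}" "card (insert j \<sigma>) = Suc k"
      "\<forall>i\<ge>n. (\<alpha>(j := \<alpha> j - 1)) i = 0" "D (mdeg n (\<alpha>(j := \<alpha> j - 1)))"
      by blast+
    have "finite (insert j \<sigma>)" using P(1) by (rule finite_subset) simp
    with P(2) j(2) have "card \<sigma> = k" by simp
    moreover have "mdeg n (\<alpha>(j := \<alpha> j - 1)) = mdeg n \<alpha> - 1"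
      using mdeg_update[OF j(1), of \<alpha> "\<alpha> j - 1"] j(3) by linarith
    with P(4) have "D (mdeg n \<alpha> - 1)" by simp
    moreover have "\<forall>i\<ge>n. \<alpha> i = 0" using P(3) j(1) by (metis fun_upd_other not_le)
    ultimately show "\<sigma> \<subseteq> {..<n} \<and> card \<sigma> = k \<and> (\<forall>i\<ge>n. \<alpha> i = 0) \<and> D (mdeg n \<alpha> - 1)"
      using P(1) by simp
  qed
qed

lemma extd_mspan:
  assumes c: "c \<in> mspan n k (\<lambda>\<alpha> \<sigma>. D (mdeg n \<alpha>))"
  shows "extd c \<in> mspan n (Suc k) (\<lambda>\<alpha> \<sigma>. D (mdeg n \<alpha> + 1))"
proof -
  have witness: "\<exists>j. j < n \<and> j \<in> \<tau> \<and> finite \<tau> \<and> c (\<beta>(j := \<beta> j + 1), \<tau> - {j}) \<noteq> 0"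
    if nz: "extd c (\<beta>, \<tau>) \<noteq> 0" for \<beta> \<tau>
  proof -
    have "finite \<tau>" using nz extd_apply_infinite by blast
    moreover obtain j where "j \<in> \<tau>"
      and "ins_sign \<tau> j * real (\<beta> j + 1) * c (\<beta>(j := \<beta> j + 1), \<tau> - {j}) \<noteq> 0"
      using nz unfolding extd_apply by (rule sum.not_neutral_contains_not_neutral)
    moreover from this(2) have "c (\<beta>(j := \<beta> j + 1), \<tau> - {j}) \<noteq> 0" by simp
    moreover from mspanD[OF c this] have "j < n"
      by (metis add_eq_0_iff_both_eq_0 fun_upd_same not_le one_neq_zero)
    ultimately show ?thesis by blast
  qed
  show ?thesis
  proof (rule mspanI)
    show "finite {m. extd c m \<noteq> 0}"
    proof (rule finite_support_local[OF mspan_finite_support[OF c]])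
      fix m assume nz: "extd c m \<noteq> 0"
      obtain \<beta> \<tau> where m: "m = (\<beta>, \<tau>)" by (cases m)
      obtain j where "j < n" "j \<in> \<tau>" "c (\<beta>(j := \<beta> j + 1), \<tau> - {j}) \<noteq> 0"
        using witness nz unfolding m by blast
      then show "\<exists>m' j. c m' \<noteq> 0 \<and> j < n \<and>
          m = (\<lambda>(\<beta>', \<tau>') j. (\<beta>'(j := \<beta>' j - 1), insert j \<tau>')) m' j"
        unfolding m by (intro exI[of _ "(\<beta>(j := \<beta> j + 1), \<tau> - {j})"] exI[of _ j]) (auto simp: insert_absorb)
    qed
  next
    fix \<alpha> \<sigma> assume "extd c (\<alpha>, \<sigma>) \<noteq> 0"
    then obtain j where j: "j < n" "j \<in> \<sigma>" "finite \<sigma>"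
      and "c (\<alpha>(j := \<alpha> j + 1), \<sigma> - {j}) \<noteq> 0"
      using witness by blast
    from mspanD[OF c this(4)] have P: "\<sigma> - {j} \<subseteq> {..<n}" "card (\<sigma> - {j}) = k"
      "\<forall>i\<ge>n. (\<alpha>(j := \<alpha> j + 1)) i = 0" "D (mdeg n (\<alpha>(j := \<alpha> j + 1)))"
      by blast+
    have "mdeg n (\<alpha>(j := \<alpha> j + 1)) = mdeg n \<alpha> + 1"
      using mdeg_update[OF j(1), of \<alpha> "\<alpha> j + 1"] by linarith
    with P(4) have "D (mdeg n \<alpha> + 1)" by simp
    moreover have "card \<sigma> = Suc k" using P(2) j(2,3) card_Suc_Diff1 by metis
    moreover have "\<forall>i\<ge>n. \<alpha> i = 0" using P(3) j(1) by (metis fun_upd_other not_le)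
    ultimately show "\<sigma> \<subseteq> {..<n} \<and> card \<sigma> = Suc k \<and> (\<forall>i\<ge>n. \<alpha> i = 0) \<and> D (mdeg n \<alpha> + 1)"
      using P(1) j(1) by auto
  qed
qed

lemma koszul_forms_0: "c \<in> forms n 0 \<Longrightarrow> koszul n c = (\<lambda>_. 0)"
proof (intro ext, clarify)
  fix \<beta> \<tau> assume c: "c \<in> forms n 0"
  have "c (\<beta>(j := \<beta> j - 1), insert j \<tau>) = 0" if "j \<in> koszul_indices n \<beta> \<tau>" for j
  proof (rule ccontr)
    assume "c (\<beta>(j := \<beta> j - 1), insert j \<tau>) \<noteq> 0"
    then have "insert j \<tau> \<subseteq> {..<n}" "card (insert j \<tau>) = 0" using mspanD[OF c] by blast+
    then show False using finite_subset by fastforce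
  qed
  then show "koszul n c (\<beta>, \<tau>) = 0" by (simp add: koszul_apply)
qed

definition add_closed :: "pform set \<Rightarrow> bool" where
  "add_closed A \<longleftrightarrow> (\<lambda>_. 0) \<in> A \<and> (\<forall>x\<in>A. \<forall>y\<in>A. (\<lambda>m. x m + y m) \<in> A)"

lemma add_closed_zero: "add_closed A \<Longrightarrow> (\<lambda>_. 0) \<in> A"
  unfolding add_closed_def by blast

lemma add_closed_add: "add_closed A \<Longrightarrow> x \<in> A \<Longrightarrow> y \<in> A \<Longrightarrow> (\<lambda>m. x m + y m) \<in> A"
  unfolding add_closed_def by blast

lemma add_closed_sum:
  assumes "add_closed A" and "finite L" and "\<And>l. l \<in> L \<Longrightarrow> f l \<in> A"
  shows "(\<lambda>m. \<Sum>l\<in>L. f l m) \<in> A"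
  using assms(2,3)
proof (induction L rule: finite_induct)
  case empty
  then show ?case using add_closed_zero[OF assms(1)] by simp
next
  case (insert l L)
  then show ?case using add_closed_add[OF assms(1), of "f l" "\<lambda>m. \<Sum>l\<in>L. f l m"] by simp
qed

lemma add_closed_image:
  assumes "add_closed A" and "g (\<lambda>_. 0) = (\<lambda>_. 0)"
    and "\<And>x y. g (\<lambda>m. x m + y m) = (\<lambda>m. g x m + g y m)"
  shows "add_closed (g ` A)"
  unfolding add_closed_def
proof (intro conjI ballI)
  show "(\<lambda>_. 0) \<in> g ` A"
    by (rule image_eqI[of _ g "\<lambda>_. 0"]) (simp_all add: assms(2) add_closed_zero[OF assms(1)])
  fix gx gy assume "gx \<in> g ` A" "gy \<in> g ` A"
  then obtain x y where xy: "x \<in> A" "y \<in> A" and g: "gx = g x" "gy = g y" by blast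
  from add_closed_add[OF assms(1) xy] have "(\<lambda>m. x m + y m) \<in> A" .
  then have "g (\<lambda>m. x m + y m) \<in> g ` A" by (rule imageI)
  then show "(\<lambda>m. gx m + gy m) \<in> g ` A" by (simp add: g assms(3))
qed

lemma add_closed_mspan: "add_closed (mspan n k P)"
  unfolding add_closed_def
proof (intro conjI ballI)
  show "(\<lambda>_. 0) \<in> mspan n k P" unfolding mspan_def by simp
  fix x y assume x: "x \<in> mspan n k P" and y: "y \<in> mspan n k P"
  show "(\<lambda>m. x m + y m) \<in> mspan n k P"
  proof (rule mspanI)
    have "{m. x m + y m \<noteq> 0} \<subseteq> {m. x m \<noteq> 0} \<union> {m. y m \<noteq> 0}" by auto
    moreover have "finite ({m. x m \<noteq> 0} \<union> {m. y m \<noteq> 0})"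
      using mspan_finite_support[OF x] mspan_finite_support[OF y] by simp
    ultimately show "finite {m. x m + y m \<noteq> 0}" by (rule finite_subset)
    fix \<alpha> \<sigma> assume "x (\<alpha>, \<sigma>) + y (\<alpha>, \<sigma>) \<noteq> 0"
    then have "x (\<alpha>, \<sigma>) \<noteq> 0 \<or> y (\<alpha>, \<sigma>) \<noteq> 0" by auto
    then show "\<sigma> \<subseteq> {..<n} \<and> card \<sigma> = k \<and> (\<forall>i\<ge>n. \<alpha> i = 0) \<and> P \<alpha> \<sigma>"
      using mspanD[OF x] mspanD[OF y] by blast
  qed
qed

definition rescale_closed :: "nat \<Rightarrow> pform set \<Rightarrow> bool" where
  "rescale_closed n A \<longleftrightarrow> (\<forall>\<phi> c. c \<in> A \<longrightarrow> weight_rescale n \<phi> c \<in> A)"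

lemma rescale_closedD: "rescale_closed n A \<Longrightarrow> c \<in> A \<Longrightarrow> weight_rescale n \<phi> c \<in> A"
  unfolding rescale_closed_def by blast

lemma rescale_closed_mspan: "rescale_closed n (mspan n k P)"
  unfolding rescale_closed_def by (simp add: mspan_weight_rescale)

lemma rescale_closed_image:
  assumes "rescale_closed n A" and "\<And>\<phi> c. g (weight_rescale n \<phi> c) = weight_rescale n \<phi> (g c)"
  shows "rescale_closed n (g ` A)"
  unfolding rescale_closed_def
proof (intro allI impI)
  fix \<phi> gc assume "gc \<in> g ` A"
  then obtain c where "c \<in> A" "gc = g c" by blast
  with rescale_closedD[OF assms(1)] assms(2) show "weight_rescale n \<phi> gc \<in> g ` A"
    by (intro image_eqI[of _ g "weight_rescale n \<phi> c"]) simp_all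
qed

definition sum_set :: "pform set \<Rightarrow> pform set \<Rightarrow> pform set" where
  "sum_set A B = {(\<lambda>m. a m + b m) | a b. a \<in> A \<and> b \<in> B}"

lemma sum_setI: "a \<in> A \<Longrightarrow> b \<in> B \<Longrightarrow> (\<lambda>m. a m + b m) \<in> sum_set A B"
  unfolding sum_set_def by blast

lemma sum_setE:
  assumes "c \<in> sum_set A B"
  obtains a b where "a \<in> A" "b \<in> B" "c = (\<lambda>m. a m + b m)"
  using assms unfolding sum_set_def by blast

lemma sum_set_subset:
  "add_closed C \<Longrightarrow> A \<subseteq> C \<Longrightarrow> B \<subseteq> C \<Longrightarrow> sum_set A B \<subseteq> C"
  by (auto elim!: sum_setE intro!: add_closed_add)

lemma add_closed_sum_set:
  assumes "add_closed A" and "add_closed B"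
  shows "add_closed (sum_set A B)"
  unfolding add_closed_def
proof (intro conjI ballI)
  show "(\<lambda>_. 0) \<in> sum_set A B"
    using sum_setI[OF add_closed_zero[OF assms(1)] add_closed_zero[OF assms(2)]] by simp
  fix x y assume "x \<in> sum_set A B" "y \<in> sum_set A B"
  then obtain a b a' b' where "a \<in> A" "b \<in> B" "a' \<in> A" "b' \<in> B"
    and "x = (\<lambda>m. a m + b m)" "y = (\<lambda>m. a' m + b' m)"
    by (auto elim!: sum_setE)
  then show "(\<lambda>m. x m + y m) \<in> sum_set A B"
    using sum_setI[OF add_closed_add[OF assms(1)] add_closed_add[OF assms(2)], of a a' b b']
    by (simp add: ac_simps)
qed

lemma rescale_closed_sum_set:
  assumes "rescale_closed n A" and "rescale_closed n B"
  shows "rescale_closed n (sum_set A B)"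
  unfolding rescale_closed_def
proof (intro allI impI)
  fix \<phi> c assume "c \<in> sum_set A B"
  then obtain a b where "a \<in> A" "b \<in> B" "c = (\<lambda>m. a m + b m)" by (rule sum_setE)
  then show "weight_rescale n \<phi> c \<in> sum_set A B"
    using sum_setI[OF rescale_closedD[OF assms(1)] rescale_closedD[OF assms(2)]]
    by (simp add: weight_rescale_def distrib_left)
qed

lemma sumsp_member: "l \<in> I \<Longrightarrow> x \<in> V l \<Longrightarrow> x \<in> sumsp V I"
  unfolding sumsp_def by (intro CollectI exI[of _ "{l}"] exI[of _ "\<lambda>_. x"]) simp

lemma sumspE:
  assumes "c \<in> sumsp V I"
  obtains L f where "finite L" "L \<subseteq> I" "\<forall>l\<in>L. f l \<in> V l" "c = (\<lambda>m. \<Sum>l\<in>L. f l m)"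
  using assms that unfolding sumsp_def by blast

lemma sumsp_subset:
  assumes "\<And>l. l \<in> I \<Longrightarrow> V l \<subseteq> A" and "add_closed A"
  shows "sumsp V I \<subseteq> A"
proof
  fix c assume "c \<in> sumsp V I"
  then obtain L f where "finite L" "L \<subseteq> I" "\<forall>l\<in>L. f l \<in> V l" "c = (\<lambda>m. \<Sum>l\<in>L. f l m)"
    by (rule sumspE)
  then show "c \<in> A" using add_closed_sum[OF assms(2)] assms(1) by blast
qed

lemma add_closed_sumsp:
  assumes "\<And>l. l \<in> I \<Longrightarrow> add_closed (V l)"
  shows "add_closed (sumsp V I)"
  unfolding add_closed_def
proof (intro conjI ballI)
  show "(\<lambda>_. 0) \<in> sumsp V I"
    unfolding sumsp_def by (intro CollectI exI[of _ "{}"]) simp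
  fix x y assume "x \<in> sumsp V I" "y \<in> sumsp V I"
  then obtain L1 f1 L2 f2 where L: "finite L1" "L1 \<subseteq> I" "finite L2" "L2 \<subseteq> I"
    and f: "\<forall>l\<in>L1. f1 l \<in> V l" "\<forall>l\<in>L2. f2 l \<in> V l"
    and xy: "x = (\<lambda>m. \<Sum>l\<in>L1. f1 l m)" "y = (\<lambda>m. \<Sum>l\<in>L2. f2 l m)"
    by (elim sumspE) blast
  define g where "g l = (\<lambda>m. (if l \<in> L1 then f1 l m else 0) + (if l \<in> L2 then f2 l m else 0))" for l
  show "(\<lambda>m. x m + y m) \<in> sumsp V I"
    unfolding sumsp_def
  proof (intro CollectI exI conjI ballI)
    show "finite (L1 \<union> L2)" "L1 \<union> L2 \<subseteq> I" using L by simp_all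
    fix l assume "l \<in> L1 \<union> L2"
    then have V: "add_closed (V l)" using L assms by blast
    have "(if l \<in> L1 then f1 l else (\<lambda>_. 0)) \<in> V l" "(if l \<in> L2 then f2 l else (\<lambda>_. 0)) \<in> V l"
      using f add_closed_zero[OF V] by simp_all
    from add_closed_add[OF V this] show "g l \<in> V l"
      unfolding g_def by (simp add: if_distrib[of "\<lambda>f. f _"])
  next
    show "(\<lambda>m. x m + y m) = (\<lambda>m. \<Sum>l\<in>L1 \<union> L2. g l m)"
      using L by (simp add: xy g_def sum.distrib sum.If_cases Int_absorb1 Int_absorb2)
  qed
qed

lemma rescale_closed_sumsp:
  assumes "\<And>l. l \<in> I \<Longrightarrow> rescale_closed n (V l)"
  shows "rescale_closed n (sumsp V I)"
  unfolding rescale_closed_def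
proof (intro allI impI)
  fix \<phi> c assume "c \<in> sumsp V I"
  then obtain L f where L: "finite L" "L \<subseteq> I" and f: "\<forall>l\<in>L. f l \<in> V l"
    and c: "c = (\<lambda>m. \<Sum>l\<in>L. f l m)"
    by (rule sumspE)
  show "weight_rescale n \<phi> c \<in> sumsp V I"
    unfolding sumsp_def
  proof (intro CollectI exI conjI ballI)
    show "finite L" "L \<subseteq> I" by fact+
    show "weight_rescale n \<phi> (f l) \<in> V l" if "l \<in> L" for l
      using rescale_closedD[OF assms] f L(2) that by blast
    show "weight_rescale n \<phi> c = (\<lambda>m. \<Sum>l\<in>L. weight_rescale n \<phi> (f l) m)"
      by (simp add: c weight_rescale_def sum_distrib_left)
  qed
qed

section \<open>The serendipity spaces\<close>

definition dJsp :: "nat \<Rightarrow> nat \<Rightarrow> nat \<Rightarrow> pform set" where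
  "dJsp n r k = (if k = 0 then {\<lambda>_. 0} else extd ` Jsp n (r + 1) (k - 1))"

lemma Ssp_eq_sum_set: "Ssp n r k = sum_set (sum_set (Psp n r k) (Jsp n r k)) (dJsp n r k)"
proof
  show "Ssp n r k \<subseteq> sum_set (sum_set (Psp n r k) (Jsp n r k)) (dJsp n r k)"
  proof
    fix c assume "c \<in> Ssp n r k"
    then obtain a b e where "a \<in> Psp n r k" "b \<in> Jsp n r k" "e \<in> dJsp n r k"
      and "c = (\<lambda>m. a m + b m + e m)"
      unfolding Ssp_def dJsp_def by blast
    then show "c \<in> sum_set (sum_set (Psp n r k) (Jsp n r k)) (dJsp n r k)"
      using sum_setI[OF sum_setI] by simp
  qed
  show "sum_set (sum_set (Psp n r k) (Jsp n r k)) (dJsp n r k) \<subseteq> Ssp n r k"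
    unfolding Ssp_def dJsp_def by (fastforce elim!: sum_setE)
qed

lemma Smsp_eq_sum_set: "Smsp n r k = sum_set (Ssp n (r - 1) k) (koszul n ` Ssp n (r - 1) (k + 1))"
  unfolding Smsp_def sum_set_def by blast

lemma add_closed_Jsp: "add_closed (Jsp n r k)"
  unfolding Jsp_def Hlsp_def
  by (intro add_closed_sumsp add_closed_image add_closed_mspan koszul_zero koszul_add)

lemma rescale_closed_Jsp: "rescale_closed n (Jsp n r k)"
  unfolding Jsp_def Hlsp_def
  by (intro rescale_closed_sumsp rescale_closed_image rescale_closed_mspan koszul_weight_rescale)

lemma add_closed_dJsp: "add_closed (dJsp n r k)"
  unfolding dJsp_def
  using add_closed_image[where g = extd, OF add_closed_Jsp extd_zero extd_add]
  by (simp add: add_closed_def)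

lemma rescale_closed_dJsp: "rescale_closed n (dJsp n r k)"
  unfolding dJsp_def
  using rescale_closed_image[OF rescale_closed_Jsp extd_weight_rescale]
  by (simp add: rescale_closed_def weight_rescale_def)

lemma add_closed_Ssp: "add_closed (Ssp n r k)"
  unfolding Ssp_eq_sum_set Psp_def
  by (intro add_closed_sum_set add_closed_mspan add_closed_Jsp add_closed_dJsp)

lemma rescale_closed_Ssp: "rescale_closed n (Ssp n r k)"
  unfolding Ssp_eq_sum_set Psp_def
  by (intro rescale_closed_sum_set rescale_closed_mspan rescale_closed_Jsp rescale_closed_dJsp)

lemma rescale_closed_Smsp: "rescale_closed n (Smsp n r k)"
  unfolding Smsp_eq_sum_set
  by (intro rescale_closed_sum_set rescale_closed_Ssp rescale_closed_image koszul_weight_rescale)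

lemma koszul_forms: "c \<in> forms n (Suc k) \<Longrightarrow> koszul n c \<in> forms n k"
  using koszul_mspan[of c n k "\<lambda>_. True"] by simp

lemma extd_forms: "c \<in> forms n k \<Longrightarrow> extd c \<in> forms n (Suc k)"
  using extd_mspan[of c n k "\<lambda>_. True"] by simp

lemma Jsp_subset_forms: "Jsp n r k \<subseteq> forms n k"
  unfolding Jsp_def
proof (intro sumsp_subset add_closed_mspan)
  fix l
  have "Hlsp n (r + l - 1) l (Suc k) \<subseteq> forms n (Suc k)" unfolding Hlsp_def by (rule mspan_mono) simp
  then show "koszul n ` Hlsp n (r + l - 1) l (k + 1) \<subseteq> forms n k" by (auto intro: koszul_forms)
qed

lemma Ssp_subset_forms: "Ssp n r k \<subseteq> forms n k"
proof -
  have "dJsp n r k \<subseteq> forms n k"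
    using add_closed_zero[OF add_closed_mspan]
    by (cases k) (auto simp: dJsp_def intro!: extd_forms dest: subsetD[OF Jsp_subset_forms])
  moreover have "Psp n r k \<subseteq> forms n k" unfolding Psp_def by (rule mspan_mono) simp
  ultimately show ?thesis
    unfolding Ssp_eq_sum_set by (intro sum_set_subset add_closed_mspan Jsp_subset_forms)
qed

lemma Smsp_subset_forms: "Smsp n r k \<subseteq> forms n k"
proof -
  have "koszul n ` Ssp n (r - 1) (k + 1) \<subseteq> forms n k"
    by (auto intro!: koszul_forms dest: subsetD[OF Ssp_subset_forms])
  then show ?thesis
    unfolding Smsp_eq_sum_set by (intro sum_set_subset add_closed_mspan Ssp_subset_forms)
qed

lemma Jsp_split:
  assumes "b \<in> Jsp n q k"
  obtains h s where "h \<in> Hlsp n q 1 (k + 1)" "s \<in> Jsp n (q + 1) k"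
    "b = (\<lambda>m. koszul n h m + s m)"
proof -
  let ?V = "\<lambda>q l. koszul n ` Hlsp n (q + l - 1) l (k + 1)"
  obtain L f where L: "finite L" "L \<subseteq> {1..}" and f: "\<forall>l\<in>L. f l \<in> ?V q l"
    and b: "b = (\<lambda>m. \<Sum>l\<in>L. f l m)"
    using assms unfolding Jsp_def by (rule sumspE)
  obtain h where h: "h \<in> Hlsp n q 1 (k + 1)" and fh: "(if 1 \<in> L then f 1 else (\<lambda>_. 0)) = koszul n h"
  proof (cases "1 \<in> L")
    case True
    with f show thesis using that by auto
  next
    case False
    show thesis
    proof (rule that)
      show "(\<lambda>_. 0) \<in> Hlsp n q 1 (k + 1)" unfolding Hlsp_def by (rule add_closed_zero[OF add_closed_mspan])
      show "(if 1 \<in> L then f 1 else (\<lambda>_. 0)) = koszul n (\<lambda>_. 0)" using False by (simp add: koszul_zero)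
    qed
  qed
  \<comment> \<open>The summand of index \<open>l \<ge> 2\<close> of \<open>\<J>\<^sub>q\<close> is the summand of index \<open>l - 1\<close> of \<open>\<J>\<^sub>q\<^sub>+\<^sub>1\<close>.\<close>
  have "f l \<in> Jsp n (q + 1) k" if "l \<in> L - {1}" for l
  proof -
    have "l \<ge> 2" using that L(2) by force
    then have "Hlsp n (q + l - 1) l (k + 1) \<subseteq> Hlsp n (q + 1 + (l - 1) - 1) (l - 1) (k + 1)"
      unfolding Hlsp_def by (intro mspan_mono) auto
    then have "f l \<in> ?V (q + 1) (l - 1)" using f that by blast
    then show ?thesis unfolding Jsp_def by (rule sumsp_member[rotated]) (use \<open>l \<ge> 2\<close> in simp)
  qed
  then have "(\<lambda>m. \<Sum>l\<in>L - {1}. f l m) \<in> Jsp n (q + 1) k"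
    using L(1) by (intro add_closed_sum add_closed_Jsp) auto
  moreover have "b = (\<lambda>m. koszul n h m + (\<Sum>l\<in>L - {1}. f l m))"
  proof
    fix m
    have "b m = (if 1 \<in> L then f 1 m else 0) + (\<Sum>l\<in>L - {1}. f l m)"
      using L(1) by (simp add: b sum.remove)
    then show "b m = koszul n h m + (\<Sum>l\<in>L - {1}. f l m)"
      using fun_cong[OF fh, of m] by (simp add: if_distrib[of "\<lambda>f. f m"])
  qed
  ultimately show thesis using that h by blast
qed

lemma extd_Psp: "a \<in> Psp n q k \<Longrightarrow> extd a \<in> Psp n q (Suc k)"
proof -
  assume "a \<in> Psp n q k"
  then have "extd a \<in> mspan n (Suc k) (\<lambda>\<alpha> \<sigma>. mdeg n \<alpha> + 1 \<le> q)"
    using extd_mspan[of a n k "\<lambda>d. d \<le> q"] unfolding Psp_def by blast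
  moreover have "mspan n (Suc k) (\<lambda>\<alpha> \<sigma>. mdeg n \<alpha> + 1 \<le> q) \<subseteq> Psp n q (Suc k)"
    unfolding Psp_def by (rule mspan_mono) simp
  ultimately show ?thesis by blast
qed

lemma extd_koszul_Hlsp: "h \<in> Hlsp n q l (Suc k) \<Longrightarrow> extd (koszul n h) \<in> Psp n q (Suc k)"
proof -
  assume "h \<in> Hlsp n q l (Suc k)"
  moreover have "Hlsp n q l (Suc k) \<subseteq> mspan n (Suc k) (\<lambda>\<alpha> \<sigma>. mdeg n \<alpha> = q)"
    unfolding Hlsp_def by (rule mspan_mono) simp
  ultimately have "h \<in> mspan n (Suc k) (\<lambda>\<alpha> \<sigma>. mdeg n \<alpha> = q)" by blast
  from extd_mspan[OF koszul_mspan[OF this]]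
  have "extd (koszul n h) \<in> mspan n (Suc k) (\<lambda>\<alpha> \<sigma>. mdeg n \<alpha> + 1 - 1 = q)" .
  moreover have "mspan n (Suc k) (\<lambda>\<alpha> \<sigma>. mdeg n \<alpha> + 1 - 1 = q) \<subseteq> Psp n q (Suc k)"
    unfolding Psp_def by (rule mspan_mono) simp
  ultimately show ?thesis by blast
qed

lemma extd_Ssp: "c \<in> Ssp n q k \<Longrightarrow> extd c \<in> Ssp n q (Suc k)"
proof -
  assume "c \<in> Ssp n q k"
  then obtain a b e where a: "a \<in> Psp n q k" and b: "b \<in> Jsp n q k" and e: "e \<in> dJsp n q k"
    and c: "c = (\<lambda>m. a m + b m + e m)"
    unfolding Ssp_eq_sum_set by (auto elim!: sum_setE)
  obtain h s where h: "h \<in> Hlsp n q 1 (k + 1)" and s: "s \<in> Jsp n (q + 1) k"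
    and b_eq: "b = (\<lambda>m. koszul n h m + s m)"
    using b by (rule Jsp_split)
  have "extd e = (\<lambda>_. 0)" using e by (auto simp: dJsp_def extd_zero extd_extd split: if_splits)
  then have "extd c = (\<lambda>m. (extd a m + extd (koszul n h) m) + 0 + extd s m)"
    by (simp add: c b_eq extd_add add.assoc)
  moreover have "(\<lambda>m. extd a m + extd (koszul n h) m) \<in> Psp n q (Suc k)"
    using h unfolding Psp_def
    by (intro add_closed_add add_closed_mspan extd_Psp[OF a, unfolded Psp_def]
        extd_koszul_Hlsp[unfolded Psp_def]) simp
  moreover have "extd s \<in> dJsp n q (Suc k)" using s by (simp add: dJsp_def)
  ultimately show ?thesis
    unfolding Ssp_eq_sum_set
    using sum_setI[OF sum_setI[OF _ add_closed_zero[OF add_closed_Jsp]]] by simp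
qed

lemma extd_Smsp: "c \<in> Smsp n r k \<Longrightarrow> extd c \<in> Smsp n r (k + 1)"
proof -
  assume "c \<in> Smsp n r k"
  then obtain a b where a: "a \<in> Ssp n (r - 1) k" and b: "b \<in> Ssp n (r - 1) (k + 1)"
    and c: "c = (\<lambda>m. a m + koszul n b m)"
    unfolding Smsp_eq_sum_set by (auto elim!: sum_setE)
  \<comment> \<open>By the homotopy formula, \<open>d\<kappa>b = Nb - \<kappa>db\<close>.\<close>
  have "extd c = (\<lambda>m. (extd a m + weight_rescale n real b m) +
      koszul n (weight_rescale n (\<lambda>_. -1) (extd b)) m)"
  proof
    fix m
    show "extd c m = (extd a m + weight_rescale n real b m) +
        koszul n (weight_rescale n (\<lambda>_. -1) (extd b)) m"
      using extd_koszul_homotopy[of n b m] unfolding koszul_weight_rescale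
      by (simp add: c extd_add weight_rescale_def)
  qed
  moreover have "(\<lambda>m. extd a m + weight_rescale n real b m) \<in> Ssp n (r - 1) (k + 1)"
    using extd_Ssp[OF a] rescale_closedD[OF rescale_closed_Ssp b]
    by (intro add_closed_add add_closed_Ssp) simp_all
  moreover have "weight_rescale n (\<lambda>_. -1) (extd b) \<in> Ssp n (r - 1) (k + 1 + 1)"
    using extd_Ssp[OF b] by (intro rescale_closedD[OF rescale_closed_Ssp]) simp
  ultimately show ?thesis unfolding Smsp_eq_sum_set by (auto intro: sum_setI)
qed

section \<open>Exactness\<close>

lemma koszul_Smsp: "c \<in> Smsp n r (k + 1) \<Longrightarrow> koszul n c \<in> Smsp n r k"
proof -
  assume "c \<in> Smsp n r (k + 1)"
  then obtain a b where a: "a \<in> Ssp n (r - 1) (k + 1)" and c: "c = (\<lambda>m. a m + koszul n b m)"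
    unfolding Smsp_eq_sum_set by (auto elim!: sum_setE)
  then have "koszul n c = (\<lambda>m. 0 + koszul n a m)" by (simp add: koszul_add koszul_koszul)
  moreover have "(\<lambda>m. 0 + koszul n a m) \<in> Smsp n r k"
    unfolding Smsp_eq_sum_set by (intro sum_setI add_closed_zero[OF add_closed_Ssp] imageI a)
  ultimately show ?thesis by simp
qed

lemma constf_Smsp: "constf a \<in> Smsp n r 0"
proof -
  have "{m. constf a m \<noteq> 0} \<subseteq> {(\<lambda>_. 0, {})}" by (auto simp: constf_def split: if_splits)
  then have "constf a \<in> Psp n (r - 1) 0"
    unfolding Psp_def
    by (intro mspanI) (auto simp: constf_def mdeg_def split: if_splits intro: finite_subset)
  then have "(\<lambda>m. (constf a m + 0) + 0) \<in> Ssp n (r - 1) 0"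
    unfolding Ssp_eq_sum_set
    using add_closed_zero[OF add_closed_Jsp] add_closed_zero[OF add_closed_dJsp]
    by (intro sum_setI)
  then have "(\<lambda>m. constf a m + koszul n (\<lambda>_. 0) m) \<in> Smsp n r 0"
    unfolding Smsp_eq_sum_set using add_closed_zero[OF add_closed_Ssp] by (auto intro: sum_setI)
  then show ?thesis by (simp add: koszul_zero)
qed

lemma extd_constf: "extd (constf a) = (\<lambda>_. 0)"
proof (intro ext, clarify)
  fix \<beta> :: mindex and \<tau>
  have "\<beta>(j := \<beta> j + 1) \<noteq> (\<lambda>_. 0)" for j
  proof
    assume "\<beta>(j := \<beta> j + 1) = (\<lambda>_. 0)"
    from fun_cong[OF this, of j] show False by simp
  qed
  then show "extd (constf a) (\<beta>, \<tau>) = 0" by (simp add: extd_apply constf_def)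
qed

lemma closed_0_form_constant:
  assumes c: "c \<in> forms n 0" and "extd c = (\<lambda>_. 0)"
  shows "c = constf (c (\<lambda>_. 0, {}))"
proof (intro ext, clarify)
  fix \<alpha> \<sigma>
  have N: "real (form_weight n m) * c m = 0" for m
    using extd_koszul_homotopy[of n c m] koszul_forms_0[OF c] assms(2)
    by (simp add: extd_zero koszul_zero)
  show "c (\<alpha>, \<sigma>) = constf (c (\<lambda>_. 0, {})) (\<alpha>, \<sigma>)"
  proof (cases "c (\<alpha>, \<sigma>) = 0")
    case False
    from mspanD[OF c False] have "\<sigma> \<subseteq> {..<n}" "card \<sigma> = 0" "\<forall>i\<ge>n. \<alpha> i = 0" by blast+
    moreover from this(1) have "finite \<sigma>" by (rule finite_subset) simp
    ultimately have "\<sigma> = {}" "\<forall>i\<ge>n. \<alpha> i = 0" by simp_all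
    moreover from N[of "(\<alpha>, \<sigma>)"] False this(1) have "mdeg n \<alpha> = 0"
      by (simp add: form_weight_def)
    then have "\<forall>i<n. \<alpha> i = 0" by (simp add: mdeg_def)
    ultimately have "\<alpha> = (\<lambda>_. 0)" "\<sigma> = {}" by (auto simp: not_le[symmetric])
    then show ?thesis by (simp add: constf_def)
  qed (auto simp: constf_def)
qed

lemma closed_form_eq_extd_koszul:
  assumes c: "c \<in> forms n k" and "k \<ge> 1" and closed: "extd c = (\<lambda>_. 0)"
  shows "c = extd (koszul n (weight_rescale n (\<lambda>w. inverse (real w)) c))"
proof
  fix m
  let ?c' = "weight_rescale n (\<lambda>w. inverse (real w)) c"
  \<comment> \<open>\<open>inverse 0 = 0\<close> is harmless: the weight is at least \<open>k \<ge> 1\<close> on the support of \<open>c\<close>.\<close>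
  have "koszul n (extd ?c') = (\<lambda>_. 0)"
    unfolding extd_weight_rescale closed by (simp add: weight_rescale_def koszul_zero)
  then have "extd (koszul n ?c') m = real (form_weight n m) * ?c' m"
    using extd_koszul_homotopy[of n ?c' m] by simp
  moreover have "real (form_weight n m) * inverse (real (form_weight n m)) = 1" if "c m \<noteq> 0"
  proof -
    obtain \<alpha> \<sigma> where m: "m = (\<alpha>, \<sigma>)" by (cases m)
    with mspanD[OF c] that have "\<sigma> \<subseteq> {..<n}" "card \<sigma> = k" by auto
    with \<open>k \<ge> 1\<close> have "form_weight n m \<noteq> 0"
      by (auto simp: form_weight_def m Int_absorb2 finite_subset)
    then show ?thesis by simp
  qed
  ultimately show "c m = extd (koszul n ?c') m"
    by (cases "c m = 0") (simp_all add: weight_rescale_def mult.assoc[symmetric])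
qed

lemma Smsp_closed_0_eq_constants: "{c \<in> Smsp n r 0. extd c = (\<lambda>_. 0)} = range constf"
proof
  show "{c \<in> Smsp n r 0. extd c = (\<lambda>_. 0)} \<subseteq> range constf"
    using closed_0_form_constant Smsp_subset_forms by blast
  show "range constf \<subseteq> {c \<in> Smsp n r 0. extd c = (\<lambda>_. 0)}"
    using constf_Smsp extd_constf by blast
qed

lemma Smsp_closed_eq_extd_image:
  assumes "k \<ge> 1"
  shows "{c \<in> Smsp n r k. extd c = (\<lambda>_. 0)} = extd ` Smsp n r (k - 1)"
proof
  show "extd ` Smsp n r (k - 1) \<subseteq> {c \<in> Smsp n r k. extd c = (\<lambda>_. 0)}"
    using extd_Smsp[of _ n r "k - 1"] assms by (auto simp: extd_extd)
  show "{c \<in> Smsp n r k. extd c = (\<lambda>_. 0)} \<subseteq> extd ` Smsp n r (k - 1)"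
  proof clarify
    fix c assume c: "c \<in> Smsp n r k" and closed: "extd c = (\<lambda>_. 0)"
    let ?c' = "weight_rescale n (\<lambda>w. inverse (real w)) c"
    have "koszul n ?c' \<in> Smsp n r (k - 1)"
      using koszul_Smsp[of ?c' n r "k - 1"] rescale_closedD[OF rescale_closed_Smsp c] assms by simp
    moreover have "c = extd (koszul n ?c')"
      using closed_form_eq_extd_koszul[OF _ assms closed] c Smsp_subset_forms by blast
    ultimately show "c \<in> extd ` Smsp n r (k - 1)" by blast
  qed
qed

theorem mainTheorem5:
  fixes n r :: nat
  assumes "n \<ge> 1" and "r \<ge> 1"
  shows "(\<forall>a. constf a \<in> Smsp n r 0)
    \<and> (\<forall>k<n. extd ` Smsp n r k \<subseteq> Smsp n r (k + 1))
    \<and> {c \<in> Smsp n r 0. extd c = (\<lambda>_. 0)} = range constf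
    \<and> (\<forall>k\<in>{1..n}. {c \<in> Smsp n r k. extd c = (\<lambda>_. 0)} = extd ` Smsp n r (k - 1))"
  using constf_Smsp extd_Smsp Smsp_closed_0_eq_constants Smsp_closed_eq_extd_image by auto

end
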